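(* In the setting of the generalized Hubbard Hamiltonian $H_{\mathrm{gen}}$ on a finite graph $G=(V,E)$, assume there is no spin-orbit coupling, i.e. $t^{\uparrow,\downarrow}_{\boldsymbol r,\boldsymbol r'}=t^{\downarrow,\uparrow}_{\boldsymbol r,\boldsymbol r'}=0$ for all edges, and that $t^{\uparrow,\uparrow}_{\boldsymbol r,\boldsymbol r'}\neq0\neq t^{\downarrow,\downarrow}_{\boldsymbol r,\boldsymbol r'}$ for every edge, and let $G$ be connected. Then nonzero numbers $q_{\boldsymbol r}$ satisfy the edge condition $q_{\boldsymbol r}t^{\sigma',\sigma}_{\boldsymbol r',\boldsymbol r}s_\sigma+q_{\boldsymbol r'}t^{\bar\sigma,\bar\sigma'}_{\boldsymbol r,\boldsymbol r'}s_{\sigma'}=0$ for all edges and all $\sigma,\sigma'$ if and only if, for every edge, $q_{\boldsymbol r}/q_{\boldsymbol r'}=-t^{\downarrow,\downarrow}_{\boldsymbol r,\boldsymbol r'}/\overline{t^{\uparrow,\uparrow}_{\boldsymbol r,\boldsymbol r'}}=-t^{\uparrow,\uparrow}_{\boldsymbol r,\boldsymbol r'}/\overline{t^{\downarrow,\downarrow}_{\boldsymbol r,\boldsymbol r'}}$. In that case $|t^{\uparrow,\uparrow}_{\boldsymbol r,\boldsymbol r'}|=|t^{\downarrow,\downarrow}_{\boldsymbol r,\boldsymbol r'}|$ and $|q_{\boldsymbol r}|$ is independent of $\boldsymbol r$; normalizing $q_{\boldsymbol r}=e^{i\phi_{\boldsymbol r}}$ and writing $t^{\uparrow,\uparrow}_{\boldsymbol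 r,\boldsymbol r'}=t_{\boldsymbol r,\boldsymbol r'}e^{i\theta^{\uparrow\uparrow}_{\boldsymbol r,\boldsymbol r'}}$, $t^{\downarrow,\downarrow}_{\boldsymbol r,\boldsymbol r'}=t_{\boldsymbol r,\boldsymbol r'}e^{i\theta^{\downarrow\downarrow}_{\boldsymbol r,\boldsymbol r'}}$ with $t_{\boldsymbol r,\boldsymbol r'}>0$, the condition is equivalent to $\theta^{\uparrow\uparrow}_{\boldsymbol r,\boldsymbol r'}+\theta^{\downarrow\downarrow}_{\boldsymbol r,\boldsymbol r'}+\pi\equiv\phi_{\boldsymbol r}-\phi_{\boldsymbol r'}\pmod{2\pi}$ for every edge. Consequently, if in addition $U_{\boldsymbol r}-\mu_{\boldsymbol r,\uparrow}-\mu_{\boldsymbol r,\downarrow}=\mathcal{E}$ for all $\boldsymbol r$, then $[H_{\mathrm{gen}},\eta^\dagger]=\mathcal{E}\eta^\dagger$ with $\eta^\dagger=\sum_{\boldsymbol r}e^{i\phi_{\boldsymbol r}}c^\dagger_{\boldsymbol r,\uparrow}c^\dagger_{\boldsymbol r,\downarrow}$.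
   Context: Generalized Hubbard Hamiltonian on a finite simple graph $G=(V,E)$ (each edge with a fixed orientation $(\boldsymbol r,\boldsymbol r')$): $H_{\mathrm{gen}}=-\sum_{\sigma,\sigma'}\sum_{\{\boldsymbol r,\boldsymbol r'\}\in E}(t^{\sigma,\sigma'}_{\boldsymbol r,\boldsymbol r'}c^\dagger_{\boldsymbol r,\sigma}c_{\boldsymbol r',\sigma'}+t^{\sigma',\sigma}_{\boldsymbol r',\boldsymbol r}c^\dagger_{\boldsymbol r',\sigma'}c_{\boldsymbol r,\sigma})-\sum_{\boldsymbol r,\sigma}\mu_{\boldsymbol r,\sigma}\hat n_{\boldsymbol r,\sigma}+\sum_{\boldsymbol r}U_{\boldsymbol r}\hat n_{\boldsymbol r,\uparrow}\hat n_{\boldsymbol r,\downarrow}$ with $t^{\sigma,\sigma'}_{\boldsymbol r,\boldsymbol r'}=\overline{t^{\sigma',\sigma}_{\boldsymbol r',\boldsymbol r}}$ and real $\mu_{\boldsymbol r,\sigma},U_{\boldsymbol r}$; $c,c^\dagger$ are spin-1/2 fermion operators, $\hat n_{\boldsymbol r,\sigma}=c^\dagger_{\boldsymbol r,\sigma}c_{\boldsymbol r,\sigma}$; $s_\uparrow=1,s_\downarrow=-1$, $\bar\uparrow=\downarrow,\bar\downarrow=\uparrow$. *)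

theory Defs
  imports Complex_Main
begin

datatype spin = Up | Dn

definition spin_s :: "spin \<Rightarrow> complex" where
  "spin_s \<sigma> = (if \<sigma> = Up then 1 else -1)"

definition spin_bar :: "spin \<Rightarrow> spin" where
  "spin_bar \<sigma> = (if \<sigma> = Up then Dn else Up)"

text \<open>A state is a complex function on occupation configurations (sets of occupied modes).
  Creation/annihilation operators are defined via a Jordan-Wigner ordering of modes.\<close>

type_synonym 'v fock = "('v \<times> spin) set \<Rightarrow> complex"
type_synonym 'v op = "'v fock \<Rightarrow> 'v fock"

definition mode_less :: "('v::linorder \<times> spin) \<Rightarrow> ('v \<times> spin) \<Rightarrow> bool" where
  "mode_less a b \<longleftrightarrow> fst a < fst b \<or> (fst a = fst b \<and> snd a = Up \<and> snd b = Dn)"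

definition jw_sign :: "('v::linorder \<times> spin) set \<Rightarrow> ('v \<times> spin) \<Rightarrow> complex" where
  "jw_sign S m = (-1) ^ card {k \<in> S. mode_less k m}"

definition cdag :: "('v::linorder \<times> spin) \<Rightarrow> 'v op" where
  "cdag m \<psi> = (\<lambda>S. if m \<in> S then jw_sign (S - {m}) m * \<psi> (S - {m}) else 0)"

definition cann :: "('v::linorder \<times> spin) \<Rightarrow> 'v op" where
  "cann m \<psi> = (\<lambda>S. if m \<notin> S then jw_sign S m * \<psi> (insert m S) else 0)"

definition numop :: "('v::linorder \<times> spin) \<Rightarrow> 'v op" where
  "numop m \<psi> = cdag m (cann m \<psi>)"

definition commutator :: "'v op \<Rightarrow> 'v op \<Rightarrow> 'v op" where
  "commutator A B \<psi> = (\<lambda>S. A (B \<psi>) S - B (A \<psi>) S)"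

text \<open>E is the set of oriented edges (r,r'); the vertex set is the whole finite type 'v.\<close>

definition H_gen ::
  "(spin \<Rightarrow> spin \<Rightarrow> 'v \<Rightarrow> 'v \<Rightarrow> complex) \<Rightarrow> ('v \<Rightarrow> spin \<Rightarrow> real) \<Rightarrow> ('v \<Rightarrow> real)
   \<Rightarrow> ('v::{finite,linorder} \<times> 'v) set \<Rightarrow> 'v op" where
  "H_gen t \<mu> U E \<psi> = (\<lambda>S.
      - (\<Sum>\<sigma>\<in>{Up, Dn}. \<Sum>\<sigma>'\<in>{Up, Dn}. \<Sum>(r, r')\<in>E.
           t \<sigma> \<sigma>' r r' * cdag (r, \<sigma>) (cann (r', \<sigma>') \<psi>) S
         + t \<sigma>' \<sigma> r' r * cdag (r', \<sigma>') (cann (r, \<sigma>) \<psi>) S)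
      - (\<Sum>r\<in>UNIV. \<Sum>\<sigma>\<in>{Up, Dn}. complex_of_real (\<mu> r \<sigma>) * numop (r, \<sigma>) \<psi> S)
      + (\<Sum>r\<in>UNIV. complex_of_real (U r) * numop (r, Up) (numop (r, Dn) \<psi>) S))"

definition eta_dag :: "('v::{finite,linorder} \<Rightarrow> real) \<Rightarrow> 'v op" where
  "eta_dag \<phi> \<psi> = (\<lambda>S. \<Sum>r\<in>UNIV. exp (\<i> * complex_of_real (\<phi> r)) * cdag (r, Up) (cdag (r, Dn) \<psi>) S)"

definition simple_oriented :: "('v \<times> 'v) set \<Rightarrow> bool" where
  "simple_oriented E \<longleftrightarrow> (\<forall>(r, r')\<in>E. r \<noteq> r' \<and> (r', r) \<notin> E)"

definition graph_connected :: "('v \<times> 'v) set \<Rightarrow> bool" where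
  "graph_connected E \<longleftrightarrow> (\<forall>x y. (x, y) \<in> (E \<union> E\<inverse>)\<^sup>*)"

definition edge_cond ::
  "(spin \<Rightarrow> spin \<Rightarrow> 'v \<Rightarrow> 'v \<Rightarrow> complex) \<Rightarrow> ('v \<times> 'v) set \<Rightarrow> ('v \<Rightarrow> complex) \<Rightarrow> bool" where
  "edge_cond t E q \<longleftrightarrow> (\<forall>(r, r')\<in>E. \<forall>\<sigma> \<sigma>'.
      q r * t \<sigma>' \<sigma> r' r * spin_s \<sigma> + q r' * t (spin_bar \<sigma>) (spin_bar \<sigma>') r r' * spin_s \<sigma>' = 0)"

end

theory Submission
  imports Defs "HOL-Analysis.Complex_Transcendental"
begin

text \<open>Without spin-orbit coupling and by hermiticity, the edge condition at an edge \<open>(r, r')\<close>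
  reduces to the two linear relations
  \<open>q r * cnj (t\<^sub>\<up>\<^sub>\<up>) + q r' * t\<^sub>\<down>\<^sub>\<down> = 0\<close> and \<open>q r * cnj (t\<^sub>\<down>\<^sub>\<down>) + q r' * t\<^sub>\<up>\<^sub>\<up> = 0\<close>,
  which are the two ratio conditions. Equating the two ratios gives \<open>|t\<^sub>\<up>\<^sub>\<up>| = |t\<^sub>\<down>\<^sub>\<down>|\<close>,
  hence \<open>|q r| = |q r'|\<close> along every edge, and \<open>|q|\<close> is constant on a connected graph; in polar
  form both ratios are \<open>exp (\<i> (\<theta>\<^sub>\<up>\<^sub>\<up> + \<theta>\<^sub>\<down>\<^sub>\<down> + \<pi>))\<close>.

  For the commutator, the canonical anticommutation relations show that the pair creator
  \<open>c\<^sup>\<dagger>\<^sub>r\<^sub>\<up> c\<^sup>\<dagger>\<^sub>r\<^sub>\<down>\<close> is an eigen-operator of the on-site terms with eigenvalue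
  \<open>U r - \<mu> r \<up> - \<mu> r \<down>\<close>, while commuting it with a hopping term moves one fermion of the pair to a
  neighbour. In \<open>\<eta>\<^sup>\<dagger>\<close> the two such contributions of an edge, coming from its two endpoints, produce the same
  two-site states with coefficients exactly the two linear relations above, so they cancel.\<close>

section \<open>Canonical anticommutation relations\<close>

lemma finite_mode_set: "finite (S :: ('v::finite \<times> spin) set)"
proof -
  have "(UNIV :: spin set) = {Up, Dn}" by (auto intro: spin.exhaust)
  then have "finite (UNIV :: spin set)" by (metis finite.emptyI finite.insertI)
  then have "finite (UNIV :: ('v \<times> spin) set)" by (simp add: finite_Prod_UNIV)
  then show ?thesis by (rule rev_finite_subset) simp
qed

lemma mode_less_swap: "a \<noteq> b \<Longrightarrow> mode_less b a \<longleftrightarrow> \<not> mode_less a b"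
  by (cases a; cases b; cases "snd a"; cases "snd b") (auto simp: mode_less_def neq_iff)

lemma jw_sign_insert:
  assumes "x \<notin> (S :: ('v::{finite,linorder} \<times> spin) set)"
  shows "jw_sign (insert x S) m = (if mode_less x m then -1 else 1) * jw_sign S m"
proof (cases "mode_less x m")
  case True
  then have "{k \<in> insert x S. mode_less k m} = insert x {k \<in> S. mode_less k m}" by auto
  moreover have "card (insert x {k \<in> S. mode_less k m}) = Suc (card {k \<in> S. mode_less k m})"
    using assms finite_mode_set[of "{k \<in> S. mode_less k m}"] by simp
  ultimately show ?thesis using True by (simp add: jw_sign_def)
next
  case False
  then have "{k \<in> insert x S. mode_less k m} = {k \<in> S. mode_less k m}" by auto
  then show ?thesis using False by (simp add: jw_sign_def)
qed

lemma jw_sign_remove: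
  assumes "x \<in> (S :: ('v::{finite,linorder} \<times> spin) set)"
  shows "jw_sign S m = (if mode_less x m then -1 else 1) * jw_sign (S - {x}) m"
  using jw_sign_insert[of x "S - {x}" m] assms by (simp add: insert_absorb)

lemma jw_sign_square: "jw_sign S m * jw_sign S m = 1"
  by (simp add: jw_sign_def flip: power_add)

lemma cdag_cdag_same: "cdag a (cdag a \<psi>) = (\<lambda>S. 0)"
  by (auto simp: cdag_def)

lemma cdag_anticommute:
  fixes a b :: "'v::{finite,linorder} \<times> spin"
  assumes "a \<noteq> b"
  shows "cdag a (cdag b \<psi>) = (\<lambda>S. - cdag b (cdag a \<psi>) S)"
proof
  fix S
  show "cdag a (cdag b \<psi>) S = - cdag b (cdag a \<psi>) S"
  proof (cases "a \<in> S \<and> b \<in> S")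
    case True
    have sa: "jw_sign (S - {a}) a = (if mode_less b a then -1 else 1) * jw_sign (S - {a} - {b}) a"
      by (rule jw_sign_remove) (use True assms in auto)
    have sb: "jw_sign (S - {b}) b = (if mode_less a b then -1 else 1) * jw_sign (S - {b} - {a}) b"
      by (rule jw_sign_remove) (use True assms in auto)
    have "S - {b} - {a} = S - {a} - {b}" by auto
    \<comment> \<open>exactly one of the two sign corrections is \<open>-1\<close>, since \<open>mode_less\<close> is a strict total order\<close>
    then show ?thesis
      using True assms mode_less_swap[OF assms]
      by (cases "mode_less a b") (simp_all add: cdag_def sa sb)
  qed (auto simp: cdag_def)
qed

lemma cann_cdag:
  fixes b c :: "'v::{finite,linorder} \<times> spin"
  shows "cann b (cdag c \<psi>) = (\<lambda>S. (if b = c then \<psi> S else 0) - cdag c (cann b \<psi>) S)"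
proof
  fix S
  show "cann b (cdag c \<psi>) S = (if b = c then \<psi> S else 0) - cdag c (cann b \<psi>) S"
  proof (cases "b = c")
    case True
    then show ?thesis
      using jw_sign_square[of "S - {b}" b] jw_sign_square[of S b]
      by (cases "b \<in> S") (auto simp: cdag_def cann_def insert_absorb)
  next
    case bc: False
    show ?thesis
    proof (cases "b \<notin> S \<and> c \<in> S")
      case True
      have e: "insert b S - {c} = insert b (S - {c})" using bc by auto
      have sb: "jw_sign S b = (if mode_less c b then -1 else 1) * jw_sign (S - {c}) b"
        by (rule jw_sign_remove) (use True in auto)
      have sc: "jw_sign (insert b (S - {c})) c = (if mode_less b c then -1 else 1) * jw_sign (S - {c}) c"
        by (rule jw_sign_insert) (use True in auto)
      show ?thesis
        using True bc mode_less_swap[OF bc]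
        by (cases "mode_less b c") (simp_all add: cdag_def cann_def e sb sc)
    qed (use bc in \<open>auto simp: cdag_def cann_def\<close>)
  qed
qed

definition linear_op :: "'v op \<Rightarrow> bool" where
  "linear_op A \<longleftrightarrow> (\<forall>f g. A (\<lambda>S. f S + g S) = (\<lambda>S. A f S + A g S))
                  \<and> (\<forall>c f. A (\<lambda>S. c * f S) = (\<lambda>S. c * A f S))"

context
  fixes A :: "'v op"
  assumes A: "linear_op A"
begin

lemma linear_op_add: "A (\<lambda>S. f S + g S) = (\<lambda>S. A f S + A g S)"
  using A by (simp add: linear_op_def)

lemma linear_op_scale: "A (\<lambda>S. c * f S) = (\<lambda>S. c * A f S)"
  using A by (simp add: linear_op_def)

lemma linear_op_zero: "A (\<lambda>S. 0) = (\<lambda>S. 0)"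
  using linear_op_scale[of 0 "\<lambda>S. 0"] by simp

lemma linear_op_minus: "A (\<lambda>S. - f S) = (\<lambda>S. - A f S)"
  using linear_op_scale[of "-1" f] by simp

lemma linear_op_diff: "A (\<lambda>S. f S - g S) = (\<lambda>S. A f S - A g S)"
  using linear_op_add[of f "\<lambda>S. - g S"] by (simp add: linear_op_minus)

lemma linear_op_sum: "finite X \<Longrightarrow> A (\<lambda>S. \<Sum>x\<in>X. f x S) = (\<lambda>S. \<Sum>x\<in>X. A (f x) S)"
proof (induction X rule: finite_induct)
  case empty
  then show ?case by (simp add: linear_op_zero)
next
  case (insert x F)
  then show ?case
    using linear_op_add[of "f x" "\<lambda>S. \<Sum>y\<in>F. f y S"] by simp
qed

lemma linear_op_if: "A (\<lambda>S. if P then f S else 0) = (\<lambda>S. if P then A f S else 0)"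
  by (cases P) (simp_all add: linear_op_zero)

end

lemma linear_op_comp: "linear_op A \<Longrightarrow> linear_op B \<Longrightarrow> linear_op (\<lambda>\<psi>. A (B \<psi>))"
  by (simp add: linear_op_def)

lemma linear_op_cdag: "linear_op (cdag m)"
  by (auto simp: linear_op_def cdag_def fun_eq_iff algebra_simps)

lemma linear_op_cann: "linear_op (cann m)"
  by (auto simp: linear_op_def cann_def fun_eq_iff algebra_simps)

lemma linear_op_numop: "linear_op (numop m)"
  using linear_op_comp[OF linear_op_cdag linear_op_cann] by (simp add: numop_def[abs_def])

lemmas linear_op_simps =
  linear_op_add linear_op_scale linear_op_zero linear_op_minus linear_op_diff linear_op_if

lemmas cdag_linear = linear_op_simps[OF linear_op_cdag]
lemmas cann_linear = linear_op_simps[OF linear_op_cann]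
lemmas numop_linear = linear_op_simps[OF linear_op_numop]

lemma numop_cdag_same: "numop a (cdag (a :: 'v::{finite,linorder} \<times> spin) \<psi>) = cdag a \<psi>"
  by (simp add: numop_def cann_cdag cdag_linear cdag_cdag_same)

lemma cdag_numop_same: "cdag a (numop a \<psi>) = (\<lambda>S. 0)"
  by (simp add: numop_def cdag_cdag_same)

lemma numop_cdag_commute:
  "a \<noteq> (b :: 'v::{finite,linorder} \<times> spin) \<Longrightarrow> numop a (cdag b \<psi>) = cdag b (numop a \<psi>)"
  by (simp add: numop_def cann_cdag cdag_linear cdag_anticommute[of b a "cann a \<psi>"])

lemma cdag_commute_pair:
  fixes a :: "'v::{finite,linorder} \<times> spin"
  shows "cdag a (cdag c (cdag d \<psi>)) = cdag c (cdag d (cdag a \<psi>))"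
proof (cases "a = c")
  case True
  then show ?thesis
    by (cases "d = c") (simp_all add: cdag_cdag_same cdag_linear cdag_anticommute[of d c \<psi>])
next
  case ac: False
  show ?thesis
  proof (cases "a = d")
    case True
    then show ?thesis
      using cdag_anticommute[of c d \<psi>] ac by (simp add: cdag_cdag_same cdag_linear)
  next
    case False
    with ac show ?thesis
      by (simp add: cdag_linear cdag_anticommute[OF ac, of "cdag d \<psi>"] cdag_anticommute[OF False, of \<psi>])
  qed
qed

lemma hopping_cdag_pair:
  fixes a :: "'v::{finite,linorder} \<times> spin"
  shows "cdag a (cann b (cdag c (cdag d \<psi>))) = (\<lambda>S. cdag c (cdag d (cdag a (cann b \<psi>))) S
           + ((if b = c then cdag a (cdag d \<psi>) S else 0) - (if b = d then cdag a (cdag c \<psi>) S else 0)))"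
  by (simp add: cann_cdag cdag_linear cdag_commute_pair[of a c d] fun_eq_iff)

lemma numop_pair:
  fixes a :: "'v::{finite,linorder} \<times> spin"
  shows "numop a (cdag (x, Up) (cdag (x, Dn) \<psi>)) = (\<lambda>S. cdag (x, Up) (cdag (x, Dn) (numop a \<psi>)) S
           + (if a = (x, Up) \<or> a = (x, Dn) then cdag (x, Up) (cdag (x, Dn) \<psi>) S else 0))"
proof (cases "a = (x, Up)")
  case True
  then show ?thesis
    using cdag_anticommute[of "(x, Up)" "(x, Dn)" "numop a \<psi>"]
    by (simp add: numop_cdag_same cdag_numop_same cdag_linear)
qed (cases "a = (x, Dn)"; simp add: numop_cdag_commute numop_cdag_same cdag_numop_same cdag_linear)

lemma pair_numop_Up: "cdag (x, Up) (cdag (x, Dn) (numop (x, Up) \<psi>)) = (\<lambda>S. 0)"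
  for x :: "'v::{finite,linorder}"
  using cdag_anticommute[of "(x, Up)" "(x, Dn)" "numop (x, Up) \<psi>"]
  by (simp add: cdag_numop_same cdag_linear)

lemma pair_numop_Dn: "cdag (x, Up) (cdag (x, Dn) (numop (x, Dn) \<psi>)) = (\<lambda>S. 0)"
  for x :: "'v::{finite,linorder}"
  by (simp add: cdag_numop_same cdag_linear)

lemma double_occupancy_pair:
  fixes x y :: "'v::{finite,linorder}"
  shows "numop (y, Up) (numop (y, Dn) (cdag (x, Up) (cdag (x, Dn) \<psi>))) =
    (\<lambda>S. cdag (x, Up) (cdag (x, Dn) (numop (y, Up) (numop (y, Dn) \<psi>))) S
        + (if y = x then cdag (x, Up) (cdag (x, Dn) \<psi>) S else 0))"
  by (simp add: numop_pair numop_linear pair_numop_Up pair_numop_Dn fun_eq_iff)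

section \<open>Commutator of the Hamiltonian with a pair creator\<close>

text \<open>The part of \<open>[H, c\<^sup>\<dagger>\<^sub>x\<^sub>\<up> c\<^sup>\<dagger>\<^sub>x\<^sub>\<down>]\<close> coming from the hopping along the edge \<open>(r, r')\<close>
  (up to sign): one fermion of the pair at \<open>x\<close> hops to the other endpoint.\<close>

definition hop_remainder ::
  "(spin \<Rightarrow> spin \<Rightarrow> 'v \<Rightarrow> 'v \<Rightarrow> complex) \<Rightarrow> ('v::{finite,linorder}) fock \<Rightarrow> 'v \<Rightarrow> 'v \<Rightarrow> 'v
     \<Rightarrow> ('v \<times> spin) set \<Rightarrow> complex" where
  "hop_remainder t \<psi> r r' x S = (\<Sum>\<sigma>\<in>{Up, Dn}. \<Sum>\<sigma>'\<in>{Up, Dn}.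
      t \<sigma> \<sigma>' r r' * ((if (r', \<sigma>') = (x, Up) then cdag (r, \<sigma>) (cdag (x, Dn) \<psi>) S else 0)
                       - (if (r', \<sigma>') = (x, Dn) then cdag (r, \<sigma>) (cdag (x, Up) \<psi>) S else 0))
    + t \<sigma>' \<sigma> r' r * ((if (r, \<sigma>) = (x, Up) then cdag (r', \<sigma>') (cdag (x, Dn) \<psi>) S else 0)
                       - (if (r, \<sigma>) = (x, Dn) then cdag (r', \<sigma>') (cdag (x, Up) \<psi>) S else 0)))"

lemma hop_remainder_off_edge: "x \<noteq> r \<Longrightarrow> x \<noteq> r' \<Longrightarrow> hop_remainder t \<psi> r r' x S = 0"
  by (simp add: hop_remainder_def)

lemma sum_times_indicator:
  "(\<Sum>r\<in>UNIV. (c r :: complex) * (if r = (x :: 'v::finite) then v else 0)) = c x * v"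
  by (simp add: if_distrib[of "(*) _"] sum.delta cong: if_cong)

lemma H_gen_pair:
  fixes t :: "spin \<Rightarrow> spin \<Rightarrow> 'v::{finite,linorder} \<Rightarrow> 'v \<Rightarrow> complex"
  shows "H_gen t \<mu> U E (cdag (x, Up) (cdag (x, Dn) \<psi>)) S =
    cdag (x, Up) (cdag (x, Dn) (H_gen t \<mu> U E \<psi>)) S - (\<Sum>(r, r')\<in>E. hop_remainder t \<psi> r r' x S)
    + complex_of_real (U x - \<mu> x Up - \<mu> x Dn) * cdag (x, Up) (cdag (x, Dn) \<psi>) S"
proof -
  have "linear_op (\<lambda>\<psi>. cdag (x, Up) (cdag (x, Dn) \<psi>))"
    by (rule linear_op_comp[OF linear_op_cdag linear_op_cdag])
  note pair_linear = linear_op_simps[OF this] linear_op_sum[OF this]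
  show ?thesis
    unfolding H_gen_def
    apply (simp only: pair_linear finite finite_insert finite.emptyI case_prod_unfold double_occupancy_pair)
    apply (simp add: hopping_cdag_pair numop_pair hop_remainder_def sum_times_indicator case_prod_unfold
        distrib_left right_diff_distrib sum.distrib sum_subtractf)
    apply (simp add: algebra_simps)
    done
qed


lemma linear_op_H_gen: "linear_op (H_gen t \<mu> U (E :: ('v::{finite,linorder} \<times> 'v) set))"
  unfolding linear_op_def
proof (intro conjI allI)
  show "H_gen t \<mu> U E (\<lambda>S. f S + g S) = (\<lambda>S. H_gen t \<mu> U E f S + H_gen t \<mu> U E g S)" for f g
    unfolding H_gen_def
    by (simp add: cdag_linear cann_linear numop_linear sum.distrib distrib_left fun_eq_iff case_prod_beta
        algebra_simps)
  show "H_gen t \<mu> U E (\<lambda>S. c * f S) = (\<lambda>S. c * H_gen t \<mu> U E f S)" for c f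
    unfolding H_gen_def
    by (simp add: cdag_linear cann_linear numop_linear sum_distrib_left fun_eq_iff case_prod_beta
        algebra_simps)
qed

lemma hop_remainder_cancel:
  fixes t :: "spin \<Rightarrow> spin \<Rightarrow> 'v::{finite,linorder} \<Rightarrow> 'v \<Rightarrow> complex"
  assumes "r \<noteq> r'"
    and up: "e r * t Up Up r' r + e r' * t Dn Dn r r' = 0"
    and dn: "e r * t Dn Dn r' r + e r' * t Up Up r r' = 0"
    and no_soc: "t Up Dn r r' = 0" "t Dn Up r r' = 0" "t Up Dn r' r = 0" "t Dn Up r' r = 0"
  shows "(\<Sum>x\<in>UNIV. e x * hop_remainder t \<psi> r r' x S) = 0"
proof -
  have "(\<Sum>x\<in>UNIV. e x * hop_remainder t \<psi> r r' x S) = (\<Sum>x\<in>{r, r'}. e x * hop_remainder t \<psi> r r' x S)"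
    by (rule sum.mono_neutral_right) (auto simp: hop_remainder_off_edge)
  also have "\<dots> = cdag (r', Up) (cdag (r, Dn) \<psi>) S * (e r * t Up Up r' r + e r' * t Dn Dn r r')
      + cdag (r, Up) (cdag (r', Dn) \<psi>) S * (e r * t Dn Dn r' r + e r' * t Up Up r r')"
    using \<open>r \<noteq> r'\<close> no_soc cdag_anticommute[of "(r', Dn)" "(r, Up)" \<psi>] cdag_anticommute[of "(r, Dn)" "(r', Up)" \<psi>]
    by (simp add: hop_remainder_def algebra_simps)
  also have "\<dots> = 0" by (simp add: up dn)
  finally show ?thesis .
qed

section \<open>The edge condition\<close>

lemma all_spin: "(\<forall>\<sigma>. P \<sigma>) \<longleftrightarrow> P Up \<and> P Dn"
  by (metis spin.exhaust)

lemma edge_cond_no_soc_iff: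
  assumes herm: "\<forall>(r, r')\<in>E. \<forall>\<sigma> \<sigma>'. t \<sigma> \<sigma>' r r' = cnj (t \<sigma>' \<sigma> r' r)"
    and no_soc: "\<forall>(r, r')\<in>E. t Up Dn r r' = 0 \<and> t Dn Up r r' = 0"
  shows "edge_cond t E q \<longleftrightarrow> (\<forall>(r, r')\<in>E.
           q r * t Up Up r' r + q r' * t Dn Dn r r' = 0
         \<and> q r * t Dn Dn r' r + q r' * t Up Up r r' = 0)"
proof -
  have "t Up Dn r' r = 0 \<and> t Dn Up r' r = 0" if "(r, r') \<in> E" for r r'
    using herm no_soc that by fastforce
  then show ?thesis
    using no_soc unfolding edge_cond_def
    by (intro ball_cong refl) (auto simp: all_spin spin_s_def spin_bar_def add_eq_0_iff)
qed

lemma edge_cond_iff_ratio: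
  assumes herm: "\<forall>(r, r')\<in>E. \<forall>\<sigma> \<sigma>'. t \<sigma> \<sigma>' r r' = cnj (t \<sigma>' \<sigma> r' r)"
    and no_soc: "\<forall>(r, r')\<in>E. t Up Dn r r' = 0 \<and> t Dn Up r r' = 0"
    and nonzero: "\<forall>(r, r')\<in>E. t Up Up r r' \<noteq> 0 \<and> t Dn Dn r r' \<noteq> 0"
    and q: "\<forall>r. q r \<noteq> 0"
  shows "edge_cond t E q \<longleftrightarrow> (\<forall>(r, r')\<in>E.
           q r / q r' = - t Dn Dn r r' / cnj (t Up Up r r')
         \<and> q r / q r' = - t Up Up r r' / cnj (t Dn Dn r r'))"
  unfolding edge_cond_no_soc_iff[OF herm no_soc]
proof (intro ball_cong refl, clarify)
  fix r r' assume "(r, r') \<in> E"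
  then have "t Up Up r' r = cnj (t Up Up r r')" "t Dn Dn r' r = cnj (t Dn Dn r r')"
    and "cnj (t Up Up r r') \<noteq> 0" "cnj (t Dn Dn r r') \<noteq> 0"
    using herm nonzero by (fastforce simp: complex_cnj_cnj)+
  then show "(q r * t Up Up r' r + q r' * t Dn Dn r r' = 0 \<and> q r * t Dn Dn r' r + q r' * t Up Up r r' = 0)
    \<longleftrightarrow> (q r / q r' = - t Dn Dn r r' / cnj (t Up Up r r') \<and> q r / q r' = - t Up Up r r' / cnj (t Dn Dn r r'))"
    using q by (simp add: field_simps add_eq_0_iff)
qed

lemma cmod_eq_of_ratios:
  assumes "cnj a \<noteq> 0" "cnj b \<noteq> 0" "- b / cnj a = - a / cnj b"
  shows "cmod a = cmod b"
proof -
  have "b * cnj b = a * cnj a" using assms by (simp add: frac_eq_eq)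
  then have "complex_of_real ((cmod b)\<^sup>2) = complex_of_real ((cmod a)\<^sup>2)"
    by (simp only: complex_norm_square)
  then have "(cmod b)\<^sup>2 = (cmod a)\<^sup>2" using of_real_eq_iff by blast
  then show ?thesis by (simp add: power2_eq_iff_nonneg)
qed

lemma graph_connected_const:
  assumes "graph_connected E" and "\<forall>(a, b)\<in>E. f a = f b"
  shows "f x = f y"
proof -
  have "(x, y) \<in> (E \<union> E\<inverse>)\<^sup>*" using assms(1) by (simp add: graph_connected_def)
  then show ?thesis
    by (induction rule: rtrancl_induct) (use assms(2) in auto)
qed

lemma edge_cond_cmod:
  assumes conn: "graph_connected E"
    and herm: "\<forall>(r, r')\<in>E. \<forall>\<sigma> \<sigma>'. t \<sigma> \<sigma>' r r' = cnj (t \<sigma>' \<sigma> r' r)"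
    and no_soc: "\<forall>(r, r')\<in>E. t Up Dn r r' = 0 \<and> t Dn Up r r' = 0"
    and nonzero: "\<forall>(r, r')\<in>E. t Up Up r r' \<noteq> 0 \<and> t Dn Dn r r' \<noteq> 0"
    and q: "\<forall>r. q r \<noteq> 0" and ec: "edge_cond t E q"
  shows "(\<forall>(r, r')\<in>E. cmod (t Up Up r r') = cmod (t Dn Dn r r')) \<and> (\<forall>r r'. cmod (q r) = cmod (q r'))"
proof -
  have hop: "cmod (t Up Up r r') = cmod (t Dn Dn r r')" and vertex: "cmod (q r) = cmod (q r')"
    if "(r, r') \<in> E" for r r'
  proof -
    have ratio: "q r / q r' = - t Dn Dn r r' / cnj (t Up Up r r')"
      "q r / q r' = - t Up Up r r' / cnj (t Dn Dn r r')"
      using ec that unfolding edge_cond_iff_ratio[OF herm no_soc nonzero q] by auto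
    have nz: "t Up Up r r' \<noteq> 0" "t Dn Dn r r' \<noteq> 0" using nonzero that by auto
    then show hop: "cmod (t Up Up r r') = cmod (t Dn Dn r r')"
      using ratio by (intro cmod_eq_of_ratios) auto
    have "cmod (q r / q r') = cmod (t Dn Dn r r') / cmod (t Up Up r r')"
      unfolding ratio(1) by (simp add: norm_divide)
    then show "cmod (q r) = cmod (q r')"
      using hop nz q by (simp add: norm_divide field_simps)
  qed
  have "\<forall>(r, r')\<in>E. cmod (q r) = cmod (q r')" using vertex by blast
  then show ?thesis
    using hop graph_connected_const[OF conn, of "\<lambda>r. cmod (q r)"] by blast
qed

lemma exp_i_eq_iff: "exp (\<i> * complex_of_real x) = exp (\<i> * complex_of_real y) \<longleftrightarrow>
    (\<exists>k :: int. y = x + 2 * pi * of_int k)"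
proof -
  have "exp (\<i> * complex_of_real x) = exp (\<i> * complex_of_real y) \<longleftrightarrow>
        (\<exists>k :: int. x = y + 2 * pi * of_int k)"
    unfolding exp_eq by (simp add: complex_eq_iff algebra_simps)
  also have "\<dots> \<longleftrightarrow> (\<exists>k :: int. y = x + 2 * pi * of_int k)"
  proof (intro iffI; elim exE)
    show "\<exists>k :: int. y = x + 2 * pi * of_int k" if "x = y + 2 * pi * of_int k" for k :: int
      using that by (intro exI[of _ "- k"]) simp
    show "\<exists>k :: int. x = y + 2 * pi * of_int k" if "y = x + 2 * pi * of_int k" for k :: int
      using that by (intro exI[of _ "- k"]) simp
  qed
  finally show ?thesis .
qed

lemma polar_ratio_iff:
  assumes "tt > 0"
    and up: "tuu = complex_of_real tt * exp (\<i> * complex_of_real \<theta>uu)"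
    and dn: "tdd = complex_of_real tt * exp (\<i> * complex_of_real \<theta>dd)"
  shows "(exp (\<i> * complex_of_real \<phi>) / exp (\<i> * complex_of_real \<phi>') = - tdd / cnj tuu
        \<and> exp (\<i> * complex_of_real \<phi>) / exp (\<i> * complex_of_real \<phi>') = - tuu / cnj tdd)
     \<longleftrightarrow> (\<exists>k :: int. \<theta>uu + \<theta>dd + pi = \<phi> - \<phi>' + 2 * pi * of_int k)"
proof -
  have "complex_of_real tt \<noteq> 0" using \<open>tt > 0\<close> by simp
  then have dn_up: "- tdd / cnj tuu = exp (\<i> * complex_of_real (\<theta>uu + \<theta>dd + pi))"
    and up_dn: "- tuu / cnj tdd = exp (\<i> * complex_of_real (\<theta>uu + \<theta>dd + pi))"
    by (simp_all add: up dn exp_cnj exp_minus field_simps distrib_left exp_add)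
  have ratio: "exp (\<i> * complex_of_real \<phi>) / exp (\<i> * complex_of_real \<phi>')
      = exp (\<i> * complex_of_real (\<phi> - \<phi>'))"
    by (simp add: exp_diff[symmetric] right_diff_distrib)
  show ?thesis unfolding ratio dn_up up_dn exp_i_eq_iff by simp
qed

lemma edge_cond_iff_phase:
  assumes herm: "\<forall>(r, r')\<in>E. \<forall>\<sigma> \<sigma>'. t \<sigma> \<sigma>' r r' = cnj (t \<sigma>' \<sigma> r' r)"
    and no_soc: "\<forall>(r, r')\<in>E. t Up Dn r r' = 0 \<and> t Dn Up r r' = 0"
    and nonzero: "\<forall>(r, r')\<in>E. t Up Up r r' \<noteq> 0 \<and> t Dn Dn r r' \<noteq> 0"
    and polar: "\<forall>(r, r')\<in>E. tt r r' > 0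
        \<and> t Up Up r r' = complex_of_real (tt r r') * exp (\<i> * complex_of_real (\<theta>uu r r'))
        \<and> t Dn Dn r r' = complex_of_real (tt r r') * exp (\<i> * complex_of_real (\<theta>dd r r'))"
  shows "edge_cond t E (\<lambda>r. exp (\<i> * complex_of_real (\<phi> r))) \<longleftrightarrow>
      (\<forall>(r, r')\<in>E. \<exists>k :: int. \<theta>uu r r' + \<theta>dd r r' + pi = \<phi> r - \<phi> r' + 2 * pi * of_int k)"
proof -
  let ?q = "\<lambda>r. exp (\<i> * complex_of_real (\<phi> r))"
  have "edge_cond t E ?q \<longleftrightarrow> (\<forall>(r, r')\<in>E. ?q r / ?q r' = - t Dn Dn r r' / cnj (t Up Up r r')
               \<and> ?q r / ?q r' = - t Up Up r r' / cnj (t Dn Dn r r'))"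
    by (rule edge_cond_iff_ratio[OF herm no_soc nonzero]) simp
  also have "\<dots> \<longleftrightarrow>
      (\<forall>(r, r')\<in>E. \<exists>k :: int. \<theta>uu r r' + \<theta>dd r r' + pi = \<phi> r - \<phi> r' + 2 * pi * of_int k)"
    by (intro ball_cong refl, clarify, rule polar_ratio_iff) (use polar in auto)
  finally show ?thesis .
qed

lemma commutator_H_gen_eta_dag:
  fixes t :: "spin \<Rightarrow> spin \<Rightarrow> 'v::{finite,linorder} \<Rightarrow> 'v \<Rightarrow> complex"
  assumes simple: "simple_oriented E"
    and herm: "\<forall>(r, r')\<in>E. \<forall>\<sigma> \<sigma>'. t \<sigma> \<sigma>' r r' = cnj (t \<sigma>' \<sigma> r' r)"
    and no_soc: "\<forall>(r, r')\<in>E. t Up Dn r r' = 0 \<and> t Dn Up r r' = 0"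
    and ec: "edge_cond t E (\<lambda>r. exp (\<i> * complex_of_real (\<phi> r)))"
    and energy: "\<forall>r. U r - \<mu> r Up - \<mu> r Dn = \<E>"
  shows "commutator (H_gen t \<mu> U E) (eta_dag \<phi>) = (\<lambda>\<psi> S. complex_of_real \<E> * eta_dag \<phi> \<psi> S)"
proof (intro ext)
  fix \<psi> S
  define e where "e r = exp (\<i> * complex_of_real (\<phi> r))" for r
  let ?H = "H_gen t \<mu> U E"
  let ?P = "\<lambda>r \<psi>. cdag (r, Up) (cdag (r, Dn) \<psi>)"
  have eta: "eta_dag \<phi> \<psi>' = (\<lambda>S. \<Sum>r\<in>UNIV. e r * ?P r \<psi>' S)" for \<psi>'
    by (simp add: eta_dag_def e_def fun_eq_iff)
  have H_eta: "?H (eta_dag \<phi> \<psi>) S = (\<Sum>r\<in>UNIV. e r * ?H (?P r \<psi>) S)"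
    unfolding eta by (simp add: linear_op_sum[OF linear_op_H_gen] linear_op_scale[OF linear_op_H_gen])
  have edge_cancel: "(\<Sum>x\<in>UNIV. e x * hop_remainder t \<psi> a b x S) = 0" if "(a, b) \<in> E" for a b
  proof (rule hop_remainder_cancel)
    show "a \<noteq> b" using simple that by (auto simp: simple_oriented_def)
    show "e a * t Up Up b a + e b * t Dn Dn a b = 0" "e a * t Dn Dn b a + e b * t Up Up a b = 0"
      using ec that unfolding edge_cond_no_soc_iff[OF herm no_soc] e_def by auto
    show "t Up Dn a b = 0" "t Dn Up a b = 0" "t Up Dn b a = 0" "t Dn Up b a = 0"
      using herm no_soc that by fastforce+
  qed
  have "(\<Sum>x\<in>UNIV. e x * (\<Sum>(a, b)\<in>E. hop_remainder t \<psi> a b x S))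
      = (\<Sum>(a, b)\<in>E. \<Sum>x\<in>UNIV. e x * hop_remainder t \<psi> a b x S)"
    by (simp add: sum_distrib_left case_prod_beta sum.swap[of _ UNIV E])
  also have "\<dots> = 0" by (rule sum.neutral) (auto simp: edge_cancel)
  finally have hopping_cancel: "(\<Sum>x\<in>UNIV. e x * (\<Sum>(a, b)\<in>E. hop_remainder t \<psi> a b x S)) = 0" .
  have "commutator ?H (eta_dag \<phi>) \<psi> S = (\<Sum>r\<in>UNIV. e r * (?H (?P r \<psi>) S - ?P r (?H \<psi>) S))"
    unfolding commutator_def H_eta by (simp add: eta sum_subtractf right_diff_distrib)
  also have "\<dots> = (\<Sum>r\<in>UNIV. complex_of_real \<E> * (e r * ?P r \<psi> S)
                   - e r * (\<Sum>(a, b)\<in>E. hop_remainder t \<psi> a b r S))"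
    using energy by (intro sum.cong refl) (simp add: H_gen_pair algebra_simps)
  also have "\<dots> = complex_of_real \<E> * eta_dag \<phi> \<psi> S"
    using hopping_cancel by (simp add: sum_subtractf eta sum_distrib_left)
  finally show "commutator ?H (eta_dag \<phi>) \<psi> S = complex_of_real \<E> * eta_dag \<phi> \<psi> S" .
qed

theorem mainTheorem5:
  fixes t :: "spin \<Rightarrow> spin \<Rightarrow> 'v::{finite,linorder} \<Rightarrow> 'v \<Rightarrow> complex"
    and \<mu> :: "'v \<Rightarrow> spin \<Rightarrow> real"
    and U :: "'v \<Rightarrow> real"
    and E :: "('v \<times> 'v) set"
  assumes simple: "simple_oriented E"
    and conn: "graph_connected E"
    and herm: "\<forall>(r, r')\<in>E. \<forall>\<sigma> \<sigma>'. t \<sigma> \<sigma>' r r' = cnj (t \<sigma>' \<sigma> r' r)"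
    and no_soc: "\<forall>(r, r')\<in>E. t Up Dn r r' = 0 \<and> t Dn Up r r' = 0"
    and nonzero: "\<forall>(r, r')\<in>E. t Up Up r r' \<noteq> 0 \<and> t Dn Dn r r' \<noteq> 0"
  shows
    "(\<forall>q :: 'v \<Rightarrow> complex. (\<forall>r. q r \<noteq> 0) \<longrightarrow>
        (edge_cond t E q \<longleftrightarrow>
          (\<forall>(r, r')\<in>E. q r / q r' = - t Dn Dn r r' / cnj (t Up Up r r')
                      \<and> q r / q r' = - t Up Up r r' / cnj (t Dn Dn r r'))))
   \<and> (\<forall>q :: 'v \<Rightarrow> complex. (\<forall>r. q r \<noteq> 0) \<and> edge_cond t E q \<longrightarrow>
        (\<forall>(r, r')\<in>E. cmod (t Up Up r r') = cmod (t Dn Dn r r'))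
        \<and> (\<forall>r r'. cmod (q r) = cmod (q r')))
   \<and> (\<forall>(\<phi> :: 'v \<Rightarrow> real) (tt :: 'v \<Rightarrow> 'v \<Rightarrow> real) (\<theta>uu :: 'v \<Rightarrow> 'v \<Rightarrow> real) (\<theta>dd :: 'v \<Rightarrow> 'v \<Rightarrow> real).
        (\<forall>(r, r')\<in>E. tt r r' > 0
            \<and> t Up Up r r' = complex_of_real (tt r r') * exp (\<i> * complex_of_real (\<theta>uu r r'))
            \<and> t Dn Dn r r' = complex_of_real (tt r r') * exp (\<i> * complex_of_real (\<theta>dd r r'))) \<longrightarrow>
        (edge_cond t E (\<lambda>r. exp (\<i> * complex_of_real (\<phi> r))) \<longleftrightarrow>
          (\<forall>(r, r')\<in>E. \<exists>k :: int. \<theta>uu r r' + \<theta>dd r r' + pi = \<phi> r - \<phi> r' + 2 * pi * of_int k)))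
   \<and> (\<forall>(\<phi> :: 'v \<Rightarrow> real) (\<E> :: real).
        edge_cond t E (\<lambda>r. exp (\<i> * complex_of_real (\<phi> r)))
        \<and> (\<forall>r. U r - \<mu> r Up - \<mu> r Dn = \<E>) \<longrightarrow>
        commutator (H_gen t \<mu> U E) (eta_dag \<phi>) = (\<lambda>\<psi> S. complex_of_real \<E> * eta_dag \<phi> \<psi> S))"
  by (intro conjI; intro allI impI; (elim conjE)?;
      rule edge_cond_iff_ratio[OF herm no_soc nonzero] edge_cond_iff_phase[OF herm no_soc nonzero]
        edge_cond_cmod[OF conn herm no_soc nonzero] commutator_H_gen_eta_dag[OF simple herm no_soc];
      assumption)

end
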